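(* For every positive integer $m$, \begin{align*} \zeta^\star(\bar 1,\{1\}_m,\bar 1)=&\frac{(-1)^m}{m!}\zeta(2)\ln^m(2)\\ &-\frac{(-1)^m}{(m+1)!}\sum_{i=1}^{m}(-1)^{i+1}\, i!\binom{m+1}{i}(\ln 2)^{m+1-i}\Big\{\zeta^\star(\bar 1,\{1\}_{i-1},\bar 1)-\zeta^\star(\bar 1,\{1\}_i)\Big\}\\ &+\frac{(-1)^m}{m!}\sum_{k=1}^{m}\binom{m}{k}(-1)^{k+1}\left\{\sum_{l=1}^{k} l!\binom{k}{l}(\ln 2)^{m-l}\,\mathrm{Li}_{l+2}\!\left(\tfrac12\right)-k!(\ln 2)^{m-k}\zeta(k+2)\right\}, \end{align*} where $\zeta^\star(\bar 1,\bar 1)=\frac{\zeta(2)+\ln^2(2)}{2}$.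
   Context: For nonzero integers $s_1,\dots,s_k$, with $\operatorname{sgn}(s)=1$ if $s>0$ and $-1$ if $s<0$, the multiple zeta star value is $\zeta^\star(s_1,\dots,s_k)=\sum_{n_1\ge n_2\ge\cdots\ge n_k\ge 1}\prod_{j=1}^k n_j^{-|s_j|}\operatorname{sgn}(s_j)^{n_j}$ (convergent when $s_1\neq 1$). A barred entry $\bar p$ denotes the negative entry $-p$, e.g. $\zeta^\star(\bar 1,1,\bar 1)=\zeta^\star(-1,1,-1)$. The notation $\{s\}_d$ means the entry $s$ repeated $d$ times ($d=0$ means no entries). $\zeta(s)=\sum_{n\ge1}n^{-s}$ is the Riemann zeta function and $\mathrm{Li}_s(x)=\sum_{n\ge1}x^n/n^s$ is the polylogarithm. *)

theory Defs
  imports Complex_Main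
begin

text \<open>Truncated multiple zeta star sum with signed entries:
  zstar_trunc N [s1,...,sk] = sum over N >= n1 >= n2 >= ... >= nk >= 1 of
  prod_j sgn(s_j)^(n_j) / n_j^|s_j|.\<close>
fun zstar_trunc :: "nat \<Rightarrow> int list \<Rightarrow> real" where
  "zstar_trunc N [] = 1"
| "zstar_trunc N (s # ss) =
     (\<Sum>n = 1..N. (sgn (real_of_int s)) ^ n / (real n) ^ (nat \<bar>s\<bar>) * zstar_trunc n ss)"

definition zeta_star :: "int list \<Rightarrow> real" where
  "zeta_star ss = lim (\<lambda>N. zstar_trunc N ss)"

definition rzeta :: "nat \<Rightarrow> real" where
  "rzeta k = (\<Sum>n. 1 / (real (Suc n)) ^ k)"

definition polylog :: "nat \<Rightarrow> real \<Rightarrow> real" where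
  "polylog s x = (\<Sum>n. x ^ Suc n / (real (Suc n)) ^ s)"

end

theory Submission
  imports Defs "HOL-Analysis.Analysis"
begin

text \<open>
  The star values occurring in the identity have closed forms:
  \<open>\<zeta>\<^sup>\<star>(-1,{1}\<^sub>m,-1) = \<zeta>(m+2) - Li\<^sub>m\<^sub>+\<^sub>2(1/2)\<close>, \<open>\<zeta>\<^sup>\<star>(-1,{1}\<^sub>i) = -Li\<^sub>i\<^sub>+\<^sub>1(1/2)\<close> and
  \<open>\<zeta>\<^sup>\<star>(-1,-1) = (\<zeta>(2) + ln\<^sup>2 2)/2\<close>. By Pascal's rule the inner truncated sums are binomial sums
  \<open>\<Sum>\<^sub>k (n choose k) d\<^sub>k / k\<^sup>q\<close>, so the full truncated sum is an Euler-type transform of a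
  polylogarithm series. It is evaluated via \<open>1/k\<^sup>p\<^sup>+\<^sup>1 = \<integral>\<^sub>0\<^sup>1 u\<^sup>k\<^sup>-\<^sup>1 (-ln u)\<^sup>p/p! du\<close>: under the
  integral the transform becomes a geometric series, and dominated convergence applies.
  Once the closed forms are inserted, the zeta values in the identity telescope and the
  polylogarithms cancel by binomial inversion.
\<close>

section \<open>An integral representation of \<open>1/j\<^sup>p\<^sup>+\<^sup>1\<close>\<close>

lemma tendsto_mult_neg_ln_power_at_right_0:
  "((\<lambda>u::real. u * (- ln u) ^ k) \<longlongrightarrow> 0) (at_right 0)"
proof -
  have "filterlim (\<lambda>u::real. - ln u) at_top (at_right 0)"
    using ln_at_0 filterlim_uminus_at_bot by blast
  from filterlim_compose[OF tendsto_power_div_exp_0 this]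
  have lim: "((\<lambda>u::real. (- ln u) ^ k / exp (- ln u)) \<longlongrightarrow> 0) (at_right 0)" .
  have "\<forall>\<^sub>F u in at_right 0. (- ln u) ^ k / exp (- ln u) = u * (- ln (u::real)) ^ k"
    using eventually_at_right_less[of "0::real"]
    by eventually_elim (simp add: exp_minus field_simps)
  with lim show ?thesis
    using tendsto_cong by fastforce
qed

lemma continuous_on_power_mult_neg_ln_power:
  assumes "j \<ge> 1"
  shows "continuous_on {0..1} (\<lambda>u::real. u ^ j * (- ln u) ^ k)"
  unfolding continuous_on_eq_continuous_within
proof
  fix x :: real assume x: "x \<in> {0..1}"
  show "continuous (at x within {0..1}) (\<lambda>u. u ^ j * (- ln u) ^ k)"
  proof (cases "x = 0")
    case False
    with x have "continuous (at x) (\<lambda>u. u ^ j * (- ln u) ^ k)"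
      by (intro continuous_intros) auto
    then show ?thesis
      using continuous_at_imp_continuous_at_within by blast
  next
    case True
    have "\<forall>\<^sub>F u in at_right 0. norm (u ^ j * (- ln u) ^ k) \<le> u * (- ln u) ^ k"
    proof -
      have "\<forall>\<^sub>F u in at_right 0. 0 < u \<and> u < (1::real)"
        by (subst eventually_at_right[of 0 1]) (auto intro: exI[of _ 1])
      then show ?thesis
      proof eventually_elim
        case (elim u)
        then have "u ^ j \<le> u"
          using assms by (metis less_eq_real_def power_decreasing power_one_right)
        moreover have "0 \<le> u ^ j" "0 \<le> (- ln u) ^ k"
          using elim by simp_all
        ultimately show ?case
          by (simp only: real_norm_def abs_mult abs_of_nonneg mult_right_mono)
      qed
    qed
    from Lim_null_comparison[OF this tendsto_mult_neg_ln_power_at_right_0]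
    have "((\<lambda>u. u ^ j * (- ln u) ^ k) \<longlongrightarrow> 0) (at_right (0::real))" .
    moreover have "(0::real) ^ j * (- ln 0) ^ k = 0"
      using assms by simp
    ultimately show ?thesis
      unfolding True continuous_within at_within_Icc_at_right[OF zero_less_one] by (simp only:)
  qed
qed

text \<open>An antiderivative of \<open>u\<^sup>j\<^sup>-\<^sup>1 (-ln u)\<^sup>p\<close>, obtained by integrating by parts \<open>p\<close> times.\<close>
primrec power_ln_antideriv :: "nat \<Rightarrow> nat \<Rightarrow> real \<Rightarrow> real" where
  "power_ln_antideriv j 0 u = u ^ j / j"
| "power_ln_antideriv j (Suc p) u =
     Suc p / j * power_ln_antideriv j p u + u ^ j * (- ln u) ^ Suc p / j"

lemma power_ln_antideriv_Suc:
  "power_ln_antideriv j (Suc p) =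
     (\<lambda>u. Suc p / j * power_ln_antideriv j p u + u ^ j * (- ln u) ^ Suc p / j)"
  by (rule ext) simp

lemma power_ln_antideriv_has_real_derivative:
  assumes "j \<ge> 1" "0 < u"
  shows "(power_ln_antideriv j p has_real_derivative u ^ (j - 1) * (- ln u) ^ p) (at u)"
proof (induction p)
  case 0
  have "((\<lambda>u. u ^ j / j) has_real_derivative j * u ^ (j - 1) / j) (at u)"
    using assms by (intro derivative_eq_intros) auto
  then show ?case
    using assms by simp
next
  case (Suc p)
  obtain i where j: "j = Suc i"
    using assms by (cases j) auto
  have "((\<lambda>u. - ln u) has_real_derivative - (1 / u)) (at u)"
    using assms by (auto intro!: derivative_eq_intros)
  from DERIV_mult[OF DERIV_pow[of j u] DERIV_power_Suc[OF this, of p]]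
  have "((\<lambda>u. u ^ j * (- ln u) ^ Suc p) has_real_derivative
        j * u ^ (j - 1) * (- ln u) ^ Suc p + (1 + real p) * (- (1 / u) * (- ln u) ^ p) * u ^ j)
        (at u)"
    by simp
  then have "((\<lambda>u. Suc p / j * power_ln_antideriv j p u + u ^ j * (- ln u) ^ Suc p / j)
        has_real_derivative
        Suc p / j * (u ^ (j - 1) * (- ln u) ^ p)
        + (j * u ^ (j - 1) * (- ln u) ^ Suc p + (1 + real p) * (- (1 / u) * (- ln u) ^ p) * u ^ j) / j)
        (at u)"
    by (intro DERIV_add DERIV_cmult DERIV_cdivide Suc.IH)
  moreover have "Suc p / j * (u ^ (j - 1) * L ^ p)
        + (j * u ^ (j - 1) * L ^ Suc p + (1 + real p) * (- (1 / u) * L ^ p) * u ^ j) / j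
      = u ^ (j - 1) * L ^ Suc p" for L :: real
    using assms unfolding j by (simp add: field_simps del: of_nat_Suc) (simp add: algebra_simps)
  ultimately show ?case
    unfolding power_ln_antideriv_Suc by metis
qed

lemma continuous_on_power_ln_antideriv:
  "j \<ge> 1 \<Longrightarrow> continuous_on {0..1} (power_ln_antideriv j p)"
proof (induction p)
  case (Suc p)
  then show ?case
    unfolding power_ln_antideriv_Suc
    by (intro continuous_on_add continuous_on_mult continuous_on_divide continuous_on_const
        continuous_on_power_mult_neg_ln_power) auto
qed (auto intro!: continuous_intros)

lemma power_ln_antideriv_0: "j \<ge> 1 \<Longrightarrow> power_ln_antideriv j p 0 = 0"
  by (induction p) auto

lemma power_ln_antideriv_1: "j \<ge> 1 \<Longrightarrow> power_ln_antideriv j p 1 = fact p / j ^ (p + 1)"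
  by (induction p) (auto simp: field_simps)

text \<open>Note \<open>ln_kernel p 0 = 0\<close> for \<open>p \<ge> 1\<close> holds through the junk value \<open>ln 0 = 0\<close>.\<close>
definition ln_kernel :: "nat \<Rightarrow> real \<Rightarrow> real" where
  "ln_kernel p u = (- ln u) ^ p / fact p"

lemma ln_kernel_nonneg: "0 \<le> u \<Longrightarrow> u \<le> 1 \<Longrightarrow> 0 \<le> ln_kernel p u"
  unfolding ln_kernel_def by (cases "u = 0") auto

lemma ln_kernel_0: "p \<ge> 1 \<Longrightarrow> ln_kernel p 0 = 0"
  unfolding ln_kernel_def by simp

lemma ln_kernel_1: "p \<ge> 1 \<Longrightarrow> ln_kernel p 1 = 0"
  unfolding ln_kernel_def by simp

lemma has_integral_power_ln_kernel:
  assumes "j \<ge> 1"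
  shows "((\<lambda>u. u ^ (j - 1) * ln_kernel p u) has_integral 1 / j ^ (p + 1)) {0..1}"
proof -
  have "((\<lambda>u. u ^ (j - 1) * (- ln u) ^ p) has_integral
          power_ln_antideriv j p 1 - power_ln_antideriv j p 0) {0..1}"
    using assms power_ln_antideriv_has_real_derivative[OF assms]
    by (intro fundamental_theorem_of_calculus_interior continuous_on_power_ln_antideriv)
       (auto simp flip: has_real_derivative_iff_has_vector_derivative)
  from has_integral_mult_right[OF this, of "1 / fact p"] show ?thesis
    using assms by (simp add: ln_kernel_def power_ln_antideriv_0 power_ln_antideriv_1 field_simps)
qed

lemma has_integral_polynomial_ln_kernel:
  "((\<lambda>u. (\<Sum>j<k. a j * u ^ j) * ln_kernel p u) has_integral
     (\<Sum>j<k. a j / real (Suc j) ^ (p + 1))) {0..1}"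
proof -
  have "((\<lambda>u. \<Sum>j<k. a j * (u ^ (Suc j - 1) * ln_kernel p u)) has_integral
          (\<Sum>j<k. a j * (1 / real (Suc j) ^ (p + 1)))) {0..1}"
    by (intro has_integral_sum has_integral_mult_right has_integral_power_ln_kernel) auto
  then show ?thesis
    by (simp add: sum_distrib_right mult.assoc)
qed

section \<open>An Euler transform of the polylogarithm\<close>

lemma has_integral_geometric_ln_kernel:
  assumes c: "0 \<le> c" "c \<le> 1" and p: "p \<ge> 1"
  shows "((\<lambda>u. c / (1 - c * u) * ln_kernel p u) has_integral polylog (p + 1) c) {0..1}"
proof -
  define f where "f k u = (\<Sum>j<k. c ^ Suc j * u ^ j) * ln_kernel p u" for k u
  define a where "a j = c ^ Suc j / real (Suc j) ^ (p + 1)" for j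
  have f_integral: "(f k has_integral (\<Sum>j<k. a j)) {0..1}" for k
    unfolding f_def a_def by (rule has_integral_polynomial_ln_kernel)
  have "summable a"
  proof (rule summable_comparison_test)
    show "summable (\<lambda>n. 1 / real (Suc n) ^ 2)"
      using inverse_power_summable[of 2, where 'a=real]
      by (subst summable_Suc_iff) (simp add: inverse_eq_divide)
    have "c ^ Suc n / real (Suc n) ^ (p + 1) \<le> 1 / real (Suc n) ^ 2" for n
      using c p by (intro frac_le power_le_one power_increasing) auto
    then show "\<exists>N. \<forall>n\<ge>N. norm (a n) \<le> 1 / real (Suc n) ^ 2"
      using c by (auto simp: a_def)
  qed
  have "(\<lambda>u. c / (1 - c * u) * ln_kernel p u) integrable_on {0..1} \<and>
     (\<lambda>k. integral {0..1} (f k)) \<longlonglongrightarrow> integral {0..1} (\<lambda>u. c / (1 - c * u) * ln_kernel p u)"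
  proof (rule monotone_convergence_increasing)
    show "f k integrable_on {0..1}" for k
      using f_integral by blast
    show "f k x \<le> f (Suc k) x" if "x \<in> {0..1}" for k x
      using that c ln_kernel_nonneg[of x p] by (auto simp: f_def intro!: mult_right_mono)
    show "(\<lambda>k. f k x) \<longlonglongrightarrow> c / (1 - c * x) * ln_kernel p x" if x: "x \<in> {0..1}" for x
    proof (cases "c * x < 1")
      case True
      with x c have "(\<lambda>j. c * (c * x) ^ j) sums (c * (1 / (1 - c * x)))"
        by (intro sums_mult geometric_sums) auto
      then have "(\<lambda>k. \<Sum>j<k. c ^ Suc j * x ^ j) \<longlonglongrightarrow> c / (1 - c * x)"
        by (simp add: sums_def power_mult_distrib mult.assoc)
      then show ?thesis
        unfolding f_def by (intro tendsto_mult tendsto_const)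
    next
      case False
      with x c have "x = 1"
        using mult_right_mono[of c 1 x] by auto
      then show ?thesis
        unfolding f_def using ln_kernel_1[OF p] by simp
    qed
    have "integral {0..1} (f k) = (\<Sum>j<k. a j)" for k
      using f_integral by blast
    moreover have "0 \<le> (\<Sum>j<k. a j)" for k
      using c by (auto simp: a_def intro!: sum_nonneg)
    moreover have "(\<Sum>j<k. a j) \<le> suminf a" for k
      using c by (intro sum_le_suminf[OF \<open>summable a\<close>]) (auto simp: a_def)
    ultimately show "bounded (range (\<lambda>k. integral {0..1} (f k)))"
      unfolding bounded_iff by (intro exI[of _ "suminf a"]) auto
  qed
  moreover have "suminf a = polylog (p + 1) c"
    unfolding a_def polylog_def by simp
  then have "(\<lambda>k. integral {0..1} (f k)) \<longlonglongrightarrow> polylog (p + 1) c"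
    using f_integral[THEN integral_unique] summable_LIMSEQ[OF \<open>summable a\<close>] by simp
  ultimately show ?thesis
    using LIMSEQ_unique has_integral_integrable_integral by metis
qed

text \<open>For \<open>c = 1/2\<close> and \<open>c = 1\<close> these are the binomial sums of the truncated star values,
  divided by \<open>n\<close>; with the signs \<open>(-1)\<^sup>n\<close> the terms sum to \<open>-Li\<^sub>p\<^sub>+\<^sub>1(c)\<close>.\<close>
definition euler_term :: "real \<Rightarrow> nat \<Rightarrow> nat \<Rightarrow> real" where
  "euler_term c p n =
     (\<Sum>j<n. real ((n - 1) choose j) * (- 2 * c) ^ j * (2 * c) / real (Suc j) ^ (p + 1))"

lemma has_integral_euler_term:
  assumes "n \<ge> 1"
  shows "((\<lambda>u. 2 * c * (1 - 2 * c * u) ^ (n - 1) * ln_kernel p u) has_integral euler_term c p n)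
     {0..1}"
proof -
  have "(1 - 2 * c * u) ^ (n - 1) = (\<Sum>j<n. real ((n - 1) choose j) * (- 2 * c) ^ j * u ^ j)"
    for u
  proof -
    have "(1 - 2 * c * u) ^ (n - 1) = ((- 2 * c) * u + 1) ^ (n - 1)"
      by simp
    also have "\<dots> = (\<Sum>j<n. real ((n - 1) choose j) * ((- 2 * c) ^ j * u ^ j))"
      unfolding binomial_ring power_mult_distrib using assms
      by (simp add: lessThan_Suc_atMost[symmetric])
    finally show ?thesis
      by (simp add: mult.assoc)
  qed
  then show ?thesis
    using has_integral_polynomial_ln_kernel
      [of "\<lambda>j. 2 * c * (real ((n - 1) choose j) * (- 2 * c) ^ j)" n p]
    by (simp add: euler_term_def sum_distrib_left mult_ac)
qed

lemma alternating_sum_euler_kernel: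
  assumes c: "0 \<le> c" "c \<le> 1" and p: "p \<ge> 1" and u: "u \<in> {0..1}"
  shows "(\<Sum>n=1..N. (-1) ^ n * (2 * c * (1 - 2 * c * u) ^ (n - 1) * ln_kernel p u))
       = - c * (1 - (2 * c * u - 1) ^ N) / (1 - c * u) * ln_kernel p u"
proof (cases "c * u < 1")
  case True
  have "(\<Sum>n=1..N. (-1) ^ n * (1 - 2 * c * u) ^ (n - 1)) = - (\<Sum>i<N. (2 * c * u - 1) ^ i)"
    by (simp add: sum.atLeast1_atMost_eq sum_negf[symmetric] power_mult_distrib[symmetric])
  also have "\<dots> = - (1 - (2 * c * u - 1) ^ N) / (2 * (1 - c * u))"
    using True by (simp add: sum_gp_strict algebra_simps minus_divide_left)
  finally have geometric: "(\<Sum>n=1..N. (-1) ^ n * (1 - 2 * c * u) ^ (n - 1))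
      = - (1 - (2 * c * u - 1) ^ N) / (2 * (1 - c * u))" .
  have "(\<Sum>n=1..N. (-1) ^ n * (2 * c * (1 - 2 * c * u) ^ (n - 1) * ln_kernel p u))
      = 2 * c * ln_kernel p u * (\<Sum>n=1..N. (-1) ^ n * (1 - 2 * c * u) ^ (n - 1))"
    by (simp add: sum_distrib_left mult_ac)
  then show ?thesis
    unfolding geometric using True by (simp add: field_simps)
next
  case False
  with c u have "u = 1"
    using mult_right_mono[of c 1 u] by auto
  then show ?thesis
    using ln_kernel_1[OF p] by simp
qed

lemma alternating_sum_euler_term_tendsto:
  assumes c: "0 < c" "c \<le> 1" and p: "p \<ge> 1"
  shows "(\<lambda>N. \<Sum>n=1..N. (-1) ^ n * euler_term c p n) \<longlonglongrightarrow> - polylog (p + 1) c"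
proof -
  define F where
    "F N u = (\<Sum>n=1..N. (-1) ^ n * (2 * c * (1 - 2 * c * u) ^ (n - 1) * ln_kernel p u))" for N u
  define g where "g u = c / (1 - c * u) * ln_kernel p u" for u
  have F_integral: "(F N has_integral (\<Sum>n=1..N. (-1) ^ n * euler_term c p n)) {0..1}" for N
    unfolding F_def by (intro has_integral_sum has_integral_mult_right has_integral_euler_term) auto
  have F_eq: "F N u = - c * (1 - (2 * c * u - 1) ^ N) / (1 - c * u) * ln_kernel p u"
    if "u \<in> {0..1}" for N u
    using alternating_sum_euler_kernel[OF _ c(2) p that] c unfolding F_def by simp
  have g_integral: "(g has_integral polylog (p + 1) c) {0..1}"
    unfolding g_def using has_integral_geometric_ln_kernel c p by simp
  \<comment> \<open>\<open>F N\<close> is a partial geometric sum with ratio \<open>2cu - 1 \<in> [-1,1]\<close>, hence dominated by \<open>2 g\<close>.\<close>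
  have "(\<lambda>N. integral {0..1} (F N)) \<longlonglongrightarrow> integral {0..1} (\<lambda>u. - g u)"
  proof (rule dominated_convergence(2))
    show "F N integrable_on {0..1}" for N
      using F_integral by blast
    show "(\<lambda>u. 2 * g u) integrable_on {0..1}"
      using has_integral_mult_right[OF g_integral, of 2] by blast
    show "norm (F N u) \<le> 2 * g u" if u: "u \<in> {0..1}" for N u
    proof -
      have "0 \<le> c * u" "c * u \<le> 1"
        using u c mult_mono[of c 1 u 1] by auto
      then have "\<bar>2 * c * u - 1\<bar> \<le> 1"
        by (simp add: abs_le_iff mult.assoc)
      then have "\<bar>(2 * c * u - 1) ^ N\<bar> \<le> 1"
        by (simp add: power_abs power_le_one)
      then have "\<bar>1 - (2 * c * u - 1) ^ N\<bar> \<le> 2"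
        by linarith
      then show ?thesis
        using u c \<open>c * u \<le> 1\<close> ln_kernel_nonneg[of u p] unfolding F_eq[OF u] g_def
        by (auto simp: abs_mult intro!: mult_right_mono mult_left_mono divide_right_mono)
    qed
    show "(\<lambda>N. F N u) \<longlonglongrightarrow> - g u" if u: "u \<in> {0..1}" for u
    proof (cases "0 < u \<and> u < 1")
      case True
      have "c * u \<le> u"
        using True c by (intro mult_left_le_one_le) auto
      with True c have cu: "0 < c * u" "c * u < 1"
        by (simp, linarith)
      then have "(\<lambda>N. (2 * c * u - 1) ^ N) \<longlonglongrightarrow> 0"
        by (intro LIMSEQ_power_zero) (auto simp: abs_less_iff mult.assoc)
      then have "(\<lambda>N. - c * (1 - (2 * c * u - 1) ^ N) / (1 - c * u) * ln_kernel p u)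
          \<longlonglongrightarrow> - c * (1 - 0) / (1 - c * u) * ln_kernel p u"
        using cu by (intro tendsto_intros) auto
      then show ?thesis
        unfolding F_eq[OF u] g_def by simp
    next
      case False
      with u have "ln_kernel p u = 0"
        using ln_kernel_0[OF p] ln_kernel_1[OF p] by (cases "u = 0") auto
      then show ?thesis
        unfolding F_eq[OF u] g_def by simp
    qed
  qed
  moreover have "integral {0..1} (\<lambda>u. - g u) = - polylog (p + 1) c"
    using has_integral_neg[OF g_integral] by (rule integral_unique)
  ultimately show ?thesis
    using F_integral[THEN integral_unique] by simp
qed

section \<open>Truncated star sums as binomial sums\<close>

lemma sum_choose_Suc_divide:
  "(\<Sum>k=1..Suc n. real (Suc n choose k) * d k / real k ^ q) / real (Suc n)
     = (\<Sum>k=1..Suc n. real (n choose (k - 1)) * d k / real k ^ Suc q)"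
  unfolding sum_divide_distrib
proof (rule sum.cong)
  fix k assume "k \<in> {1..Suc n}"
  then obtain i where k: "k = Suc i"
    by (cases k) auto
  have "real k * real (Suc n choose k) = real (Suc n) * real (n choose (k - 1))"
    using Suc_times_binomial[of i n] unfolding k by (metis diff_Suc_1 of_nat_mult)
  then have "real (Suc n choose k) / real (Suc n) = real (n choose (k - 1)) / real k"
    unfolding k by (simp add: field_simps)
  then have "real (Suc n choose k) * d k / real k ^ q / real (Suc n)
      = real (n choose (k - 1)) / real k * d k / real k ^ q"
    by (metis times_divide_eq_left divide_divide_eq_left mult.commute)
  then show "real (Suc n choose k) * d k / real k ^ q / real (Suc n)
      = real (n choose (k - 1)) * d k / real k ^ Suc q"
    by simp
qed simp

text \<open>Pascal's rule, in the form in which the truncation level of an inner sum is raised.\<close>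
lemma sum_choose_Suc_power_Suc:
  "(\<Sum>k=1..Suc n. real (Suc n choose k) * d k / real k ^ Suc q)
   = (\<Sum>k=1..n. real (n choose k) * d k / real k ^ Suc q)
     + (\<Sum>k=1..Suc n. real (Suc n choose k) * d k / real k ^ q) / real (Suc n)"
proof -
  have "(\<Sum>k=1..Suc n. real (Suc n choose k) * d k / real k ^ Suc q)
     = (\<Sum>k=1..Suc n. real (n choose k) * d k / real k ^ Suc q)
       + (\<Sum>k=1..Suc n. real (n choose (k - 1)) * d k / real k ^ Suc q)"
    unfolding sum.distrib[symmetric]
  proof (rule sum.cong)
    fix k assume "k \<in> {1..Suc n}"
    then obtain i where k: "k = Suc i"
      by (cases k) auto
    show "real (Suc n choose k) * d k / real k ^ Suc q
        = real (n choose k) * d k / real k ^ Suc q + real (n choose (k - 1)) * d k / real k ^ Suc q"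
      unfolding k by (simp add: add_divide_distrib distrib_right)
  qed simp
  moreover have "(\<Sum>k=1..n. real (n choose k) * d k / real k ^ Suc q)
      = (\<Sum>k=1..Suc n. real (n choose k) * d k / real k ^ Suc q)"
    by simp
  ultimately show ?thesis
    unfolding sum_choose_Suc_divide by simp
qed

lemma sum_divide_eq_binomial_sum:
  assumes "\<And>j. j \<ge> 1 \<Longrightarrow> f j = (\<Sum>k=1..j. real (j choose k) * d k / real k ^ q)"
  shows "(\<Sum>j=1..n. f j / real j) = (\<Sum>k=1..n. real (n choose k) * d k / real k ^ Suc q)"
proof (induction n)
  case (Suc n)
  have "(\<Sum>j=1..Suc n. f j / real j) = (\<Sum>j=1..n. f j / real j) + f (Suc n) / real (Suc n)"
    by simp
  also have "\<dots> = (\<Sum>k=1..n. real (n choose k) * d k / real k ^ Suc q)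
      + (\<Sum>k=1..Suc n. real (Suc n choose k) * d k / real k ^ q) / real (Suc n)"
    using Suc.IH assms[of "Suc n"] by simp
  finally show ?case
    by (simp only: sum_choose_Suc_power_Suc)
qed simp

lemma zstar_trunc_minus_one_Cons:
  "zstar_trunc n ((-1) # ss) = (\<Sum>j=1..n. (-1) ^ j * (zstar_trunc j ss / real j))"
  by simp

lemma zstar_trunc_replicate_one_append:
  assumes "\<And>n. n \<ge> 1 \<Longrightarrow> zstar_trunc n ss = (\<Sum>k=1..n. real (n choose k) * d k / real k ^ q)"
    and "n \<ge> 1"
  shows "zstar_trunc n (replicate m 1 @ ss) = (\<Sum>k=1..n. real (n choose k) * d k / real k ^ (q + m))"
  using assms(2)
proof (induction m arbitrary: n)
  case (Suc m)
  have "zstar_trunc n (replicate (Suc m) 1 @ ss) = (\<Sum>j=1..n. zstar_trunc j (replicate m 1 @ ss) / j)"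
    by simp
  also have "\<dots> = (\<Sum>k=1..n. real (n choose k) * d k / real k ^ Suc (q + m))"
    by (rule sum_divide_eq_binomial_sum) (rule Suc.IH)
  finally show ?case
    by simp
qed (simp add: assms(1))

lemma zstar_trunc_replicate_one:
  assumes "n \<ge> 1"
  shows "zstar_trunc n (replicate m 1) = (\<Sum>k=1..n. real (n choose k) * (-1) ^ (k + 1) / real k ^ m)"
proof -
  have "(\<Sum>k=1..n. real (n choose k) * (-1) ^ (k + 1)) = 1" if "n \<ge> 1" for n
  proof -
    have "(\<Sum>k\<le>n. (-1) ^ k * real (n choose k)) = 0"
      using choose_alternating_sum[of n] that by simp
    then have "(\<Sum>k=1..n. (-1) ^ k * real (n choose k)) = -1"
      by (simp add: atMost_atLeast0 sum.atLeast_Suc_atMost)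
    then show ?thesis
      by (simp add: sum_negf mult.commute)
  qed
  then show ?thesis
    using zstar_trunc_replicate_one_append[of "[]" "\<lambda>k. (-1) ^ (k + 1)" 0 n m] assms by simp
qed

lemma sum_choose_alternating_two_power:
  assumes "n \<ge> 1"
  shows "(\<Sum>k=1..n. real (n choose k) * ((-1) ^ k * (2 ^ k - 1))) = (-1) ^ n"
proof -
  have "(\<Sum>k\<le>n. real (n choose k) * (-2) ^ k) = (-1) ^ n"
    using binomial_ring[of "-2::real" 1 n] by simp
  moreover have "(\<Sum>k\<le>n. real (n choose k) * (-1) ^ k) = 0"
    using binomial_ring[of "-1::real" 1 n] assms by (simp add: power_0_left)
  moreover have "(\<Sum>k=1..n. real (n choose k) * ((-1) ^ k * (2 ^ k - 1)))
      = (\<Sum>k\<le>n. real (n choose k) * (-2) ^ k) - (\<Sum>k\<le>n. real (n choose k) * (-1) ^ k)"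
    by (simp add: atMost_atLeast0 sum.atLeast_Suc_atMost sum_subtractf[symmetric] algebra_simps
        power_mult_distrib[symmetric])
  ultimately show ?thesis
    by simp
qed

lemma zstar_trunc_replicate_one_minus_one:
  assumes "n \<ge> 1"
  shows "zstar_trunc n (replicate m 1 @ [-1])
     = (\<Sum>k=1..n. real (n choose k) * ((-1) ^ k * (2 ^ k - 1)) / real k ^ (m + 1))"
proof -
  have "zstar_trunc n [-1] = (\<Sum>k=1..n. real (n choose k) * ((-1) ^ k * (2 ^ k - 1)) / real k ^ 1)"
    for n
    using sum_divide_eq_binomial_sum[of "\<lambda>j. (-1) ^ j" "\<lambda>k. (-1) ^ k * (2 ^ k - 1)" 0 n]
      sum_choose_alternating_two_power by simp
  then show ?thesis
    using zstar_trunc_replicate_one_append[of "[-1]" _ 1 n m] assms by simp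
qed

section \<open>The closed forms\<close>

lemma sum_choose_divide_eq_euler_sum:
  assumes "n \<ge> 1"
  shows "(\<Sum>k=1..n. real (n choose k) * d k / real k ^ q) / real n
     = (\<Sum>j<n. real ((n - 1) choose j) * d (Suc j) / real (Suc j) ^ Suc q)"
proof -
  obtain n' where n: "n = Suc n'"
    using assms by (cases n) auto
  show ?thesis
    unfolding n sum_choose_Suc_divide by (simp add: sum.atLeast1_atMost_eq)
qed

lemma zstar_trunc_replicate_one_divide:
  assumes "n \<ge> 1"
  shows "zstar_trunc n (replicate i 1) / real n = euler_term (1 / 2) i n"
  unfolding zstar_trunc_replicate_one[OF assms] sum_choose_divide_eq_euler_sum[OF assms] euler_term_def
  by simp

lemma zstar_trunc_replicate_one_minus_one_divide:
  assumes "n \<ge> 1"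
  shows "zstar_trunc n (replicate m 1 @ [-1]) / real n
     = euler_term (1 / 2) (m + 1) n - euler_term 1 (m + 1) n"
  unfolding zstar_trunc_replicate_one_minus_one[OF assms] sum_choose_divide_eq_euler_sum[OF assms]
    euler_term_def sum_subtractf[symmetric]
  by (intro sum.cong) (auto simp: power_mult_distrib[symmetric] diff_divide_distrib algebra_simps)

lemma zstar_trunc_minus_one_replicate_one_tendsto:
  assumes "i \<ge> 1"
  shows "(\<lambda>N. zstar_trunc N ((-1) # replicate i 1)) \<longlonglongrightarrow> - polylog (i + 1) (1 / 2)"
proof -
  have "zstar_trunc N ((-1) # replicate i 1) = (\<Sum>n=1..N. (-1) ^ n * euler_term (1 / 2) i n)" for N
    unfolding zstar_trunc_minus_one_Cons by (intro sum.cong) (auto simp: zstar_trunc_replicate_one_divide)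
  then show ?thesis
    using alternating_sum_euler_term_tendsto[of "1 / 2" i] assms by simp
qed

lemma zstar_trunc_minus_one_replicate_one_minus_one_tendsto:
  "(\<lambda>N. zstar_trunc N ((-1) # replicate m 1 @ [-1])) \<longlonglongrightarrow> rzeta (m + 2) - polylog (m + 2) (1 / 2)"
proof -
  have "zstar_trunc N ((-1) # replicate m 1 @ [-1])
      = (\<Sum>n=1..N. (-1) ^ n * euler_term (1 / 2) (m + 1) n)
        - (\<Sum>n=1..N. (-1) ^ n * euler_term 1 (m + 1) n)" for N
    unfolding zstar_trunc_minus_one_Cons sum_subtractf[symmetric]
    by (intro sum.cong) (auto simp: zstar_trunc_replicate_one_minus_one_divide right_diff_distrib)
  moreover have "polylog (m + 2) 1 = rzeta (m + 2)"
    unfolding polylog_def rzeta_def by simp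
  ultimately show ?thesis
    using tendsto_diff[OF alternating_sum_euler_term_tendsto[of "1 / 2" "m + 1"]
        alternating_sum_euler_term_tendsto[of 1 "m + 1"]]
    by (simp add: numeral_2_eq_2)
qed

lemma zstar_trunc_minus_one_minus_one_tendsto:
  "(\<lambda>N. zstar_trunc N [-1, -1]) \<longlonglongrightarrow> (rzeta 2 + (ln 2) ^ 2) / 2"
proof -
  define a where "a n = (-1) ^ n / real n" for n
  have square: "zstar_trunc N [-1, -1] = ((\<Sum>n=1..N. a n) ^ 2 + (\<Sum>n=1..N. (a n) ^ 2)) / 2" for N
  proof -
    have "2 * (\<Sum>n=1..N. a n * (\<Sum>k=1..n. a k)) = (\<Sum>n=1..N. a n) ^ 2 + (\<Sum>n=1..N. (a n) ^ 2)"
      by (induction N) (auto simp: power2_eq_square algebra_simps)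
    then show ?thesis
      by (simp add: a_def)
  qed
  have "(\<lambda>N. \<Sum>n=1..N. a n) \<longlonglongrightarrow> - ln 2"
    using tendsto_minus[OF alternating_harmonic_series_sums[unfolded sums_def]]
    by (simp add: a_def sum.atLeast1_atMost_eq sum_negf[symmetric])
  moreover have "(\<lambda>N. \<Sum>n=1..N. (a n) ^ 2) \<longlonglongrightarrow> rzeta 2"
  proof -
    have "summable (\<lambda>n. 1 / real (Suc n) ^ 2)"
      using inverse_power_summable[of 2, where 'a=real]
      by (subst summable_Suc_iff) (simp add: inverse_eq_divide)
    then show ?thesis
      unfolding rzeta_def using summable_LIMSEQ
      by (simp add: a_def sum.atLeast1_atMost_eq power_divide power_even_eq[symmetric])
  qed
  ultimately have "(\<lambda>N. ((\<Sum>n=1..N. a n) ^ 2 + (\<Sum>n=1..N. (a n) ^ 2)) / 2)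
      \<longlonglongrightarrow> ((- ln 2) ^ 2 + rzeta 2) / 2"
    by (intro tendsto_intros) simp_all
  then show ?thesis
    unfolding square by (simp add: add.commute)
qed

section \<open>The algebraic identity\<close>

lemma sum_choose_mult_choose_alternating:
  assumes "1 \<le> l" "l \<le> m"
  shows "(\<Sum>k=l..m. real (m choose k) * real (k choose l) * (-1) ^ (k + 1))
     = (if l = m then (-1) ^ (m + 1) else 0)"
proof -
  have "(\<Sum>k=l..m. real (m choose k) * real (k choose l) * (-1) ^ (k + 1))
      = real (m choose l) * (\<Sum>k=l..m. real ((m - l) choose (k - l)) * (-1) ^ (k + 1))"
    unfolding sum_distrib_left
    by (intro sum.cong) (auto simp: choose_mult simp flip: of_nat_mult)
  also have "(\<Sum>k=l..m. real ((m - l) choose (k - l)) * (-1) ^ (k + 1))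
      = (-1) ^ (l + 1) * (\<Sum>j\<le>m - l. real ((m - l) choose j) * (-1) ^ j)"
  proof -
    have "{l..m} = {0 + l..(m - l) + l}"
      using assms by simp
    then show ?thesis
      by (simp only: sum.shift_bounds_cl_nat_ivl)
         (simp add: sum_distrib_left atMost_atLeast0 power_add mult_ac)
  qed
  also have "(\<Sum>j\<le>m - l. real ((m - l) choose j) * (-1) ^ j) = 0 ^ (m - l)"
    using binomial_ring[of "-1::real" 1 "m - l"] by simp
  finally show ?thesis
    using assms by (auto simp: power_0_left)
qed

text \<open>Inversion of the binomial transform \<open>g \<mapsto> (\<Sum>l\<le>k. (k choose l) g l)\<close>.\<close>
lemma sum_choose_alternating_binomial_transform:
  fixes g :: "nat \<Rightarrow> real"
  assumes "m \<ge> 1"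
  shows "(\<Sum>k=1..m. real (m choose k) * (-1) ^ (k + 1) * (\<Sum>l=1..k. real (k choose l) * g l))
     = (-1) ^ (m + 1) * g m"
proof -
  have "(\<Sum>k=1..m. real (m choose k) * (-1) ^ (k + 1) * (\<Sum>l=1..k. real (k choose l) * g l))
      = (\<Sum>k=1..m. \<Sum>l\<in>{l\<in>{1..m}. l \<le> k}. g l * (real (m choose k) * real (k choose l) * (-1) ^ (k + 1)))"
    by (intro sum.cong) (auto simp: sum_distrib_left mult_ac intro!: sum.cong)
  also have "\<dots> = (\<Sum>l=1..m. \<Sum>k\<in>{k\<in>{1..m}. l \<le> k}. g l * (real (m choose k) * real (k choose l) * (-1) ^ (k + 1)))"
    by (rule sum.swap_restrict) auto
  also have "\<dots> = (\<Sum>l=1..m. g l * (if l = m then (-1) ^ (m + 1) else 0))"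
  proof (intro sum.cong refl)
    fix l assume l: "l \<in> {1..m}"
    then have restrict: "{k\<in>{1..m}. l \<le> k} = {l..m}"
      by auto
    then show "(\<Sum>k\<in>{k\<in>{1..m}. l \<le> k}. g l * (real (m choose k) * real (k choose l) * (-1) ^ (k + 1)))
        = g l * (if l = m then (-1) ^ (m + 1) else 0)"
      using l sum_choose_mult_choose_alternating[of l m] unfolding restrict sum_distrib_left[symmetric]
      by simp
  qed
  finally show ?thesis
    using assms by (simp add: if_distrib sum.delta' cong: if_cong)
qed

lemma binomial_telescoping_identity:
  fixes z L :: "nat \<Rightarrow> real"
  assumes m: "m \<ge> 1"
  shows "z (m + 2) - L (m + 2) =
    (-1) ^ m / fact m * z 2 * a ^ m
    - (-1) ^ m / fact (m + 1) *
      (\<Sum>i=1..m. (-1) ^ (i + 1) * fact i * real ((m + 1) choose i) * a ^ (m + 1 - i) * z (i + 1))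
    + (-1) ^ m / fact m *
      (\<Sum>k=1..m. real (m choose k) * (-1) ^ (k + 1) *
         ((\<Sum>l=1..k. fact l * real (k choose l) * a ^ (m - l) * L (l + 2))
          - fact k * a ^ (m - k) * z (k + 2)))"
proof -
  \<comment> \<open>The zeta parts of the two sums are \<open>\<Sum>W\<close> shifted by one index against each other.\<close>
  define W where "W i = (-1) ^ (i + 1) * a ^ (m + 1 - i) * z (i + 1) / fact (m + 1 - i)" for i
  have first_sum: "(-1) ^ m / fact (m + 1) *
      (\<Sum>i=1..m. (-1) ^ (i + 1) * fact i * real ((m + 1) choose i) * a ^ (m + 1 - i) * z (i + 1))
      = (-1) ^ m * (\<Sum>i=1..m. W i)"
    unfolding sum_distrib_left
  proof (intro sum.cong refl)
    fix i assume i: "i \<in> {1..m}"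
    then have "fact (m + 1) = fact i * fact (m + 1 - i) * (real ((m + 1) choose i) :: real)"
      using binomial_fact_lemma[of i "m + 1"]
      by (metis le_SucI atLeastAtMost_iff Suc_eq_plus1 of_nat_fact of_nat_mult)
    moreover have "real ((m + 1) choose i) \<noteq> 0"
      using i by simp
    ultimately show "(-1) ^ m / fact (m + 1) *
        ((-1) ^ (i + 1) * fact i * real ((m + 1) choose i) * a ^ (m + 1 - i) * z (i + 1))
        = (-1) ^ m * W i"
      unfolding W_def by (simp add: field_simps)
  qed
  have zeta_sum: "(-1) ^ m / fact m *
      (\<Sum>k=1..m. real (m choose k) * (-1) ^ (k + 1) * (fact k * a ^ (m - k) * z (k + 2)))
      = - ((-1) ^ m * (\<Sum>k=1..m. W (Suc k)))"
    unfolding sum_distrib_left sum_negf[symmetric]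
  proof (intro sum.cong refl)
    fix k assume k: "k \<in> {1..m}"
    then have "fact m = fact k * fact (m - k) * (real (m choose k) :: real)"
      using binomial_fact_lemma[of k m] by (metis atLeastAtMost_iff of_nat_fact of_nat_mult)
    moreover have "real (m choose k) \<noteq> 0"
      using k by simp
    moreover have "m + 1 - Suc k = m - k"
      by simp
    ultimately show "(-1) ^ m / fact m *
        (real (m choose k) * (-1) ^ (k + 1) * (fact k * a ^ (m - k) * z (k + 2)))
        = - ((-1) ^ m * W (Suc k))"
      unfolding W_def by (simp add: field_simps)
  qed
  have polylog_sum: "(-1) ^ m / fact m *
      (\<Sum>k=1..m. real (m choose k) * (-1) ^ (k + 1) *
         (\<Sum>l=1..k. fact l * real (k choose l) * a ^ (m - l) * L (l + 2)))
      = - L (m + 2)"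
    using sum_choose_alternating_binomial_transform[OF m, of "\<lambda>l. fact l * a ^ (m - l) * L (l + 2)"]
    by (simp add: mult_ac power_add)
  have telescope: "(\<Sum>k=1..m. W (Suc k)) - (\<Sum>i=1..m. W i) = W (Suc m) - W 1"
    using sum_Suc_diff[of 1 m W] m by (simp add: sum_subtractf)
  have W_1: "W 1 = a ^ m * z 2 / fact m" and W_Suc_m: "W (Suc m) = (-1) ^ m * z (m + 2)"
    unfolding W_def by (simp_all add: numeral_2_eq_2 power_add)
  have "(-1) ^ m / fact m * z 2 * a ^ m - (-1) ^ m * (\<Sum>i=1..m. W i)
        + (- L (m + 2) - - ((-1) ^ m * (\<Sum>k=1..m. W (Suc k))))
      = (-1) ^ m * (W 1 + ((\<Sum>k=1..m. W (Suc k)) - (\<Sum>i=1..m. W i))) - L (m + 2)"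
    unfolding W_1 by (simp add: algebra_simps)
  also have "\<dots> = (-1) ^ m * (-1) ^ m * z (m + 2) - L (m + 2)"
    unfolding telescope W_Suc_m by simp
  also have "\<dots> = z (m + 2) - L (m + 2)"
    by (simp flip: power_add)
  finally have combined: "(-1) ^ m / fact m * z 2 * a ^ m - (-1) ^ m * (\<Sum>i=1..m. W i)
        + (- L (m + 2) - - ((-1) ^ m * (\<Sum>k=1..m. W (Suc k))))
      = z (m + 2) - L (m + 2)" .
  show ?thesis
    unfolding right_diff_distrib sum_subtractf first_sum zeta_sum polylog_sum combined ..
qed

theorem theorem2p5:
  fixes m :: nat
  assumes "m \<ge> 1"
  shows "zeta_star [-1, -1] = (rzeta 2 + (ln 2) ^ 2) / 2
    \<and> zeta_star ((-1) # replicate m 1 @ [-1]) =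
      (-1) ^ m / fact m * rzeta 2 * (ln 2) ^ m
      - (-1) ^ m / fact (m + 1) *
        (\<Sum>i = 1..m. (-1) ^ (i + 1) * fact i * real ((m + 1) choose i) * (ln 2) ^ (m + 1 - i)
           * (zeta_star ((-1) # replicate (i - 1) 1 @ [-1]) - zeta_star ((-1) # replicate i 1)))
      + (-1) ^ m / fact m *
        (\<Sum>k = 1..m. real (m choose k) * (-1) ^ (k + 1) *
           ((\<Sum>l = 1..k. fact l * real (k choose l) * (ln 2) ^ (m - l) * polylog (l + 2) (1 / 2))
            - fact k * (ln 2) ^ (m - k) * rzeta (k + 2)))"
proof -
  have A: "zeta_star ((-1) # replicate j 1 @ [-1]) = rzeta (j + 2) - polylog (j + 2) (1 / 2)" for j
    unfolding zeta_star_def by (rule limI) (rule zstar_trunc_minus_one_replicate_one_minus_one_tendsto)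
  have B: "zeta_star ((-1) # replicate i 1) = - polylog (i + 1) (1 / 2)" if "i \<ge> 1" for i
    unfolding zeta_star_def by (rule limI) (rule zstar_trunc_minus_one_replicate_one_tendsto[OF that])
  have C: "zeta_star [-1, -1] = (rzeta 2 + (ln 2) ^ 2) / 2"
    unfolding zeta_star_def by (rule limI) (rule zstar_trunc_minus_one_minus_one_tendsto)
  have "zeta_star ((-1) # replicate (i - 1) 1 @ [-1]) - zeta_star ((-1) # replicate i 1) = rzeta (i + 1)"
    if "i \<in> {1..m}" for i
    using that A[of "i - 1"] B[of i] by simp
  then have S: "(\<Sum>i = 1..m. (-1) ^ (i + 1) * fact i * real ((m + 1) choose i) * (ln 2) ^ (m + 1 - i)
           * (zeta_star ((-1) # replicate (i - 1) 1 @ [-1]) - zeta_star ((-1) # replicate i 1)))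
      = (\<Sum>i = 1..m. (-1) ^ (i + 1) * fact i * real ((m + 1) choose i) * (ln 2) ^ (m + 1 - i)
           * rzeta (i + 1))"
    by (intro sum.cong) simp_all
  show ?thesis
    unfolding S unfolding C A
    using binomial_telescoping_identity[OF assms, of rzeta "\<lambda>s. polylog s (1 / 2)" "ln 2"] by simp
qed

end
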